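(* Let $\tilde Q=\|q_{ik}\|$ ($k\in\mathbb N$, $i\in\{0,\dots,N_k-1\}$) define a $\tilde Q$-expansion of $[0,1]$. Suppose that for every sequence of digits $(i_k)_{k\ge1}$ with $i_k\in\{0,\dots,N_k-1\}$, $$\lim_{k\to\infty}\frac{\ln q_{i_kk}}{\ln\bigl(q_{i_11}q_{i_22}\cdots q_{i_{k-1}(k-1)}\bigr)}=0.$$ Then the family $\varPhi$ of interiors of the cylinders of this expansion is faithful for packing dimension calculation: $\dim_P(E,\varPhi)=\dim_{P(\mathit{unc})}(E)$ for every $E\subset[0,1]$.
   Context: $\tilde Q$-expansion: integers $N_k\ge2$, $q_{ik}>0$, $\sum_iq_{ik}=1$, $\prod_k\max_iq_{ik}=0$; with $\beta_{ik}=\sum_{l<i}q_{lk}$ each $x\in[0,1]$ is $x=\sum_k\beta_{a_kk}\prod_{j<k}q_{a_jj}$; the rank-$n$ cylinder $\{x:a_j(x)=c_j,j\le n\}$ is an interval of length $\prod_{j\le n}q_{c_jj}$. In $\mathbb R$: an uncentered $\varepsilon$-packing of $E$ is a countable family of pairwise disjoint open intervals of length $\le\varepsilon$ each meeting $E$; $\mathcal P^\alpha_{\varepsilon(\mathit{unc})}(E)=\sup\sum|E_i|^\alpha$, $\mathcal P^\alpha_{0(\mathit{unc})}=\lim_{\varepsilon\to0}$, $\mathcal P^\alpha_{(\mathit{unc})}(E)=\inf\{\sum_j\mathcal P^\alpha_{0(\mathit{unc})}(E_j):E\subset\bigcup E_j\}$, $\dim_{P(\mathit{unc})}(E)=\inf\{\alpha:\mathcal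 P^\alpha_{(\mathit{unc})}(E)=0\}$; $\dim_P(E,\varPhi)$ is the same using only packings by intervals from $\varPhi$. *)

theory Defs
  imports "HOL-Analysis.Analysis"
begin

text \<open>Q-tilde expansion data: N k (k \<ge> 1) digits at position k, q i k the
  weight of digit i at position k.\<close>

definition Qexp :: "(nat \<Rightarrow> nat) \<Rightarrow> (nat \<Rightarrow> nat \<Rightarrow> real) \<Rightarrow> bool" where
  "Qexp N q \<longleftrightarrow>
     (\<forall>k\<ge>1. N k \<ge> 2) \<and>
     (\<forall>k\<ge>1. \<forall>i<N k. q i k > 0) \<and>
     (\<forall>k\<ge>1. (\<Sum>i<N k. q i k) = 1) \<and>
     (\<lambda>n. \<Prod>k\<in>{1..n}. Max ((\<lambda>i. q i k) ` {..<N k})) \<longlonglongrightarrow> 0"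

definition beta :: "(nat \<Rightarrow> nat \<Rightarrow> real) \<Rightarrow> nat \<Rightarrow> nat \<Rightarrow> real" where
  "beta q i k = (\<Sum>l<i. q l k)"

definition cyl_left :: "(nat \<Rightarrow> nat \<Rightarrow> real) \<Rightarrow> nat \<Rightarrow> (nat \<Rightarrow> nat) \<Rightarrow> real" where
  "cyl_left q n c = (\<Sum>k\<in>{1..n}. beta q (c k) k * (\<Prod>j\<in>{1..<k}. q (c j) j))"

definition cyl_len :: "(nat \<Rightarrow> nat \<Rightarrow> real) \<Rightarrow> nat \<Rightarrow> (nat \<Rightarrow> nat) \<Rightarrow> real" where
  "cyl_len q n c = (\<Prod>j\<in>{1..n}. q (c j) j)"

definition cyl_interiors :: "(nat \<Rightarrow> nat) \<Rightarrow> (nat \<Rightarrow> nat \<Rightarrow> real) \<Rightarrow> real set set" where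
  "cyl_interiors N q =
     {{cyl_left q n c <..< cyl_left q n c + cyl_len q n c} | n c.
        n \<ge> 1 \<and> (\<forall>k\<in>{1..n}. c k < N k)}"

definition open_intervals :: "real set set" where
  "open_intervals = {{a<..<b} | a b. a < b}"

definition ilen :: "real set \<Rightarrow> real" where
  "ilen I = Sup I - Inf I"

definition packing :: "real set set \<Rightarrow> real \<Rightarrow> real set \<Rightarrow> real set set \<Rightarrow> bool" where
  "packing Adm eps E F \<longleftrightarrow> countable F \<and> F \<subseteq> Adm \<and> disjoint F \<and>
     (\<forall>I\<in>F. ilen I \<le> eps \<and> I \<inter> E \<noteq> {})"

definition pack_eps :: "real set set \<Rightarrow> real \<Rightarrow> real \<Rightarrow> real set \<Rightarrow> ennreal" where
  "pack_eps Adm \<alpha> eps E =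
     (SUP F \<in> {F. packing Adm eps E F}. (\<Sum>\<^sub>\<infinity> I\<in>F. ennreal (ilen I powr \<alpha>)))"

definition pack_0 :: "real set set \<Rightarrow> real \<Rightarrow> real set \<Rightarrow> ennreal" where
  "pack_0 Adm \<alpha> E = (INF eps \<in> {0<..}. pack_eps Adm \<alpha> eps E)"

definition pack_measure :: "real set set \<Rightarrow> real \<Rightarrow> real set \<Rightarrow> ennreal" where
  "pack_measure Adm \<alpha> E =
     (INF C \<in> {C :: nat \<Rightarrow> real set. E \<subseteq> (\<Union>j. C j)}. (\<Sum>j. pack_0 Adm \<alpha> (C j)))"

definition pack_dim :: "real set set \<Rightarrow> real set \<Rightarrow> real" where
  "pack_dim Adm E = Inf {\<alpha>. 0 \<le> \<alpha> \<and> pack_measure Adm \<alpha> E = 0}"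

end

theory Submission
  imports Defs
begin

text \<open>Packings by cylinders are trivially packings by open intervals, so only the
  inequality for uncentered packings needs proof. Fix exponents alpha < alpha' and a small ep.
  The hypothesis says that along every digit sequence a rank-k cylinder eventually has length at
  least the (1 + ep)-th power of the length of its parent. Hence, outside the countable set of
  cylinder endpoints, E splits into countably many pieces on each of which every small scale d
  is matched, around every point, by a cylinder of length between d^(1+ep) and d. Replacing each
  interval I of an uncentered packing by such a cylinder meeting I costs the factor
  |I|^(alpha' - (1+ep) alpha). Since cylinders form a laminar family, the replacing cylinders of
  intervals of comparable length overlap boundedly and split into boundedly many packings; summing
  over dyadic scales gives a geometric series, so the alpha'-packing premeasure by intervals is
  dominated by a constant times the alpha-packing premeasure by cylinders.\<close>

section \<open>Packing premeasures and measures\<close>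

lemma ilen_greaterThanLessThan: "a < b \<Longrightarrow> ilen {a<..<b} = b - a"
  by (simp add: ilen_def)

lemma open_intervalsE:
  assumes "I \<in> open_intervals"
  obtains l u where "I = {l<..<u}" "l < u"
  using assms unfolding open_intervals_def by blast

lemma ilen_pos: "I \<in> open_intervals \<Longrightarrow> 0 < ilen I"
  by (auto elim!: open_intervalsE simp: ilen_greaterThanLessThan)

lemma packing_mono:
  assumes "packing Adm eps E F" "Adm \<subseteq> Adm'" "eps \<le> eps'" "E \<subseteq> E'"
  shows "packing Adm' eps' E' F"
  using assms unfolding packing_def by (blast intro: order_trans)

lemma packing_subset:
  assumes "packing Adm eps E F" "G \<subseteq> F"
  shows "packing Adm eps E G"
proof -
  have "disjoint G"
    using assms unfolding packing_def disjoint_def by (meson subsetD)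
  then show ?thesis
    using assms countable_subset[OF assms(2)] unfolding packing_def by (meson subset_trans subsetD)
qed

lemma pack_eps_mono:
  "Adm \<subseteq> Adm' \<Longrightarrow> eps \<le> eps' \<Longrightarrow> E \<subseteq> E' \<Longrightarrow> pack_eps Adm a eps E \<le> pack_eps Adm' a eps' E'"
  unfolding pack_eps_def by (rule SUP_subset_mono) (auto intro: packing_mono)

lemma sum_le_pack_eps:
  assumes "finite G" "packing Adm eps E G"
  shows "ennreal (\<Sum>I\<in>G. ilen I powr a) \<le> pack_eps Adm a eps E"
proof -
  have "ennreal (\<Sum>I\<in>G. ilen I powr a) = (\<Sum>\<^sub>\<infinity>I\<in>G. ennreal (ilen I powr a))"
    using assms(1) by simp
  also have "\<dots> \<le> pack_eps Adm a eps E"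
    unfolding pack_eps_def by (rule SUP_upper) (use assms in auto)
  finally show ?thesis .
qed

lemma pack_eps_le_finite_sums:
  assumes "\<And>F. finite F \<Longrightarrow> packing Adm eps E F \<Longrightarrow> (\<Sum>I\<in>F. ilen I powr a) \<le> B"
  shows "pack_eps Adm a eps E \<le> ennreal B"
  unfolding pack_eps_def
proof (rule SUP_least)
  fix F assume "F \<in> {F. packing Adm eps E F}"
  then have F: "packing Adm eps E F" by simp
  show "(\<Sum>\<^sub>\<infinity>I\<in>F. ennreal (ilen I powr a)) \<le> ennreal B"
  proof (rule infsum_le_finite_sums)
    show "(\<lambda>I. ennreal (ilen I powr a)) summable_on F"
      by (rule nonneg_summable_on_complete) simp
    fix G assume "finite G" "G \<subseteq> F"
    then have "(\<Sum>I\<in>G. ilen I powr a) \<le> B"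
      using assms packing_subset[OF F] by blast
    then show "(\<Sum>I\<in>G. ennreal (ilen I powr a)) \<le> ennreal B"
      by (simp add: ennreal_leI)
  qed
qed

lemma pack_0_mono: "Adm \<subseteq> Adm' \<Longrightarrow> E \<subseteq> E' \<Longrightarrow> pack_0 Adm a E \<le> pack_0 Adm' a E'"
  unfolding pack_0_def by (rule INF_mono) (auto intro: pack_eps_mono)

lemma pack_0_le_pack_eps: "0 < eps \<Longrightarrow> pack_0 Adm a E \<le> pack_eps Adm a eps E"
  unfolding pack_0_def by (rule INF_lower) auto

lemma pack_measure_le_suminf:
  "E \<subseteq> (\<Union>j. C j) \<Longrightarrow> pack_measure Adm a E \<le> (\<Sum>j. pack_0 Adm a (C j))"
  unfolding pack_measure_def by (rule INF_lower) auto

lemma pack_measure_lessE: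
  assumes "pack_measure Adm a E < y"
  obtains C where "E \<subseteq> (\<Union>j. C j)" "(\<Sum>j. pack_0 Adm a (C j)) < y"
  using assms unfolding pack_measure_def by (auto simp: INF_less_iff)

lemma pack_measure_mono:
  assumes "Adm \<subseteq> Adm'" "E \<subseteq> E'"
  shows "pack_measure Adm a E \<le> pack_measure Adm' a E'"
proof -
  have "pack_measure Adm a E \<le> pack_measure Adm a E'"
    unfolding pack_measure_def by (rule INF_superset_mono) (use assms(2) in auto)
  also have "\<dots> \<le> pack_measure Adm' a E'"
    unfolding pack_measure_def by (rule INF_mono) (auto intro!: suminf_le pack_0_mono assms(1))
  finally show ?thesis .
qed

lemma ennreal_eq_0_if_le_epsilon:
  fixes x :: ennreal
  assumes "\<And>e. 0 < e \<Longrightarrow> x \<le> ennreal e"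
  shows "x = 0"
proof -
  have "x \<le> 0"
    by (rule ennreal_le_epsilon) (use assms in auto)
  then show ?thesis by simp
qed

lemma pack_measure_UN_eq_0:
  fixes A :: "nat \<Rightarrow> real set"
  assumes "\<And>m. pack_measure Adm a (A m) = 0"
  shows "pack_measure Adm a (\<Union>m. A m) = 0"
proof (rule ennreal_eq_0_if_le_epsilon)
  fix e :: real assume e: "0 < e"
  define r where "r m = e * (1/2) ^ Suc m" for m
  have r: "r sums e"
    unfolding r_def using sums_mult[OF power_half_series, of e] by (simp only: mult_1_right)
  have "\<exists>C. A m \<subseteq> (\<Union>j. C j) \<and> (\<Sum>j. pack_0 Adm a (C j)) < ennreal (r m)" for m :: nat
  proof -
    have "pack_measure Adm a (A m) < ennreal (r m)"
      using assms e by (simp add: r_def)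
    then show ?thesis by (rule pack_measure_lessE) blast
  qed
  then obtain C where C: "\<And>m. A m \<subseteq> (\<Union>j. C m j)"
    "\<And>m. (\<Sum>j. pack_0 Adm a (C m j)) < ennreal (r m)"
    by metis
  have cover: "(\<Union>m. A m) \<subseteq> (\<Union>k. case_prod C (prod_decode k))"
  proof
    fix x assume "x \<in> (\<Union>m. A m)"
    then obtain m j where "x \<in> C m j" using C(1) by blast
    then show "x \<in> (\<Union>k. case_prod C (prod_decode k))"
      by (intro UN_I[of "prod_encode (m, j)"]) auto
  qed
  have "pack_measure Adm a (\<Union>m. A m) \<le> (\<Sum>k. pack_0 Adm a (case_prod C (prod_decode k)))"
    by (rule pack_measure_le_suminf[OF cover])
  also have "\<dots> = (\<Sum>m. \<Sum>j. pack_0 Adm a (C m j))"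
    using suminf_ennreal_2dimen[of "\<lambda>m. \<Sum>j. pack_0 Adm a (C m j)" "\<lambda>(m, j). pack_0 Adm a (C m j)"]
    by (simp add: case_prod_beta)
  also have "\<dots> \<le> (\<Sum>m. ennreal (r m))"
    by (intro suminf_le) (use C(2) in \<open>auto intro: less_imp_le\<close>)
  also have "\<dots> = ennreal (\<Sum>m. r m)"
    by (rule suminf_ennreal2) (use r e in \<open>auto simp: r_def intro: sums_summable\<close>)
  also have "\<dots> = ennreal e"
    using sums_unique[OF r] by simp
  finally show "pack_measure Adm a (\<Union>m. A m) \<le> ennreal e" .
qed

lemma pack_measure_Un_eq_0:
  assumes "pack_measure Adm a A = 0" "pack_measure Adm a B = 0"
  shows "pack_measure Adm a (A \<union> B) = 0"
proof -
  have "A \<union> B = (\<Union>m::nat. if m = 0 then A else B)" by auto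
  then show ?thesis
    using pack_measure_UN_eq_0[of Adm a "\<lambda>m::nat. if m = 0 then A else B"] assms by simp
qed

lemma pack_eps_open_intervals_singleton:
  assumes "0 \<le> a" "0 < eps"
  shows "pack_eps open_intervals a eps {x} \<le> ennreal (eps powr a)"
  unfolding pack_eps_def
proof (rule SUP_least)
  fix F assume "F \<in> {F. packing open_intervals eps {x} F}"
  then have F: "packing open_intervals eps {x} F" by simp
  show "(\<Sum>\<^sub>\<infinity>I\<in>F. ennreal (ilen I powr a)) \<le> ennreal (eps powr a)"
  proof (cases "F = {}")
    case False
    then obtain I where I: "I \<in> F" by blast
    have "F = {I}"
      using F I unfolding packing_def disjoint_def by blast
    moreover have "ilen I powr a \<le> eps powr a"
    proof (rule powr_mono2)
      show "0 \<le> ilen I" "ilen I \<le> eps"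
        using F I ilen_pos unfolding packing_def by (auto intro: less_imp_le)
    qed (use assms in simp)
    ultimately show ?thesis by (simp add: ennreal_leI)
  qed simp
qed

lemma pack_0_open_intervals_singleton:
  assumes "0 < a"
  shows "pack_0 open_intervals a {x} = 0"
proof (rule ennreal_eq_0_if_le_epsilon)
  fix e :: real assume e: "0 < e"
  have "pack_0 open_intervals a {x} \<le> pack_eps open_intervals a (e powr (1/a)) {x}"
    by (rule pack_0_le_pack_eps) (use e in simp)
  also have "\<dots> \<le> ennreal ((e powr (1/a)) powr a)"
    by (rule pack_eps_open_intervals_singleton) (use e assms in auto)
  also have "(e powr (1/a)) powr a = e"
    using assms e by (simp add: powr_powr)
  finally show "pack_0 open_intervals a {x} \<le> ennreal e" .
qed

lemma pack_measure_open_intervals_countable: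
  assumes "countable S" "0 < a"
  shows "pack_measure open_intervals a S = 0"
proof -
  have "S \<subseteq> (\<Union>j. {from_nat_into S j})"
    using from_nat_into_surj[OF assms(1)] by blast
  then have "pack_measure open_intervals a S \<le> (\<Sum>j. pack_0 open_intervals a {from_nat_into S j})"
    by (rule pack_measure_le_suminf)
  then show ?thesis
    using pack_0_open_intervals_singleton[OF assms(2)] by simp
qed

lemma pack_0_le_cmult:
  assumes C: "0 < C" and e0: "0 < e0"
    and le: "\<And>eps. 0 < eps \<Longrightarrow> eps < e0 \<Longrightarrow> pack_eps A a' eps T \<le> ennreal C * pack_eps B a eps T"
  shows "pack_0 A a' T \<le> ennreal C * pack_0 B a T"
proof (rule ennreal_le_epsilon)
  fix e :: real assume fin: "ennreal C * pack_0 B a T < top" and e: "0 < e"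
  have "pack_0 B a T \<noteq> top"
    using fin C by (auto simp: ennreal_mult_top)
  then obtain y where y: "pack_0 B a T = ennreal y" "0 \<le> y"
    by (cases "pack_0 B a T" rule: ennreal_cases) auto
  have "pack_0 B a T < ennreal (y + e / C)"
    using y e C by (simp add: ennreal_less_iff)
  then obtain eps where eps: "0 < eps" "pack_eps B a eps T < ennreal (y + e / C)"
    unfolding pack_0_def by (auto simp: INF_less_iff)
  define eps' where "eps' = min eps (e0 / 2)"
  have eps': "0 < eps'" "eps' < e0" "eps' \<le> eps"
    using eps e0 by (auto simp: eps'_def)
  have "pack_0 A a' T \<le> pack_eps A a' eps' T"
    by (rule pack_0_le_pack_eps[OF eps'(1)])
  also have "\<dots> \<le> ennreal C * pack_eps B a eps' T"
    using le eps' by blast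
  also have "\<dots> \<le> ennreal C * ennreal (y + e / C)"
  proof (rule mult_left_mono)
    show "pack_eps B a eps' T \<le> ennreal (y + e / C)"
      using pack_eps_mono[OF order_refl eps'(3) order_refl] eps(2) by (rule order_trans[OF _ less_imp_le])
  qed simp
  also have "\<dots> = ennreal (C * (y + e / C))"
    using C y e by (subst ennreal_mult) auto
  also have "C * (y + e / C) = C * y + e"
    using C by (simp add: field_simps)
  also have "ennreal (C * y + e) = ennreal C * pack_0 B a T + ennreal e"
    using C y e by (subst ennreal_plus, simp_all, subst ennreal_mult) auto
  finally show "pack_0 A a' T \<le> ennreal C * pack_0 B a T + ennreal e" .
qed

lemma pack_measure_eq_0_if_pack_0_le:
  assumes C: "0 < C"
    and le: "\<And>T. T \<subseteq> S \<Longrightarrow> pack_0 A a' T \<le> ennreal C * pack_0 B a T"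
    and null: "pack_measure B a S = 0"
  shows "pack_measure A a' S = 0"
proof (rule ennreal_eq_0_if_le_epsilon)
  fix e :: real assume e: "0 < e"
  have "pack_measure B a S < ennreal (e / C)"
    using null e C by simp
  then obtain D where D: "S \<subseteq> (\<Union>j. D j)" "(\<Sum>j. pack_0 B a (D j)) < ennreal (e / C)"
    by (rule pack_measure_lessE)
  have "pack_measure A a' S \<le> (\<Sum>j. pack_0 A a' (D j \<inter> S))"
    by (rule pack_measure_le_suminf) (use D(1) in auto)
  also have "\<dots> \<le> (\<Sum>j. ennreal C * pack_0 B a (D j))"
  proof (intro suminf_le allI)
    fix j
    have "pack_0 A a' (D j \<inter> S) \<le> ennreal C * pack_0 B a (D j \<inter> S)"
      by (rule le) blast
    also have "\<dots> \<le> ennreal C * pack_0 B a (D j)"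
      by (intro mult_left_mono pack_0_mono) auto
    finally show "pack_0 A a' (D j \<inter> S) \<le> ennreal C * pack_0 B a (D j)" .
  qed auto
  also have "\<dots> = ennreal C * (\<Sum>j. pack_0 B a (D j))"
    by simp
  also have "\<dots> \<le> ennreal C * ennreal (e / C)"
    using D(2) by (intro mult_left_mono) auto
  also have "\<dots> = ennreal e"
    using C e by (simp add: ennreal_mult[symmetric])
  finally show "pack_measure A a' S \<le> ennreal e" .
qed

lemma pack_dim_eqI:
  assumes le: "\<And>\<alpha>. 0 \<le> \<alpha> \<Longrightarrow> pack_measure Adm' \<alpha> E = 0 \<Longrightarrow> pack_measure Adm \<alpha> E = 0"
    and up: "\<And>\<alpha> \<alpha>'. 0 \<le> \<alpha> \<Longrightarrow> \<alpha> < \<alpha>' \<Longrightarrow> pack_measure Adm \<alpha> E = 0 \<Longrightarrow> pack_measure Adm' \<alpha>' E = 0"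
  shows "pack_dim Adm E = pack_dim Adm' E"
proof -
  define Z where "Z Adm = {\<alpha>. 0 \<le> \<alpha> \<and> pack_measure Adm \<alpha> E = 0}" for Adm
  have sub: "Z Adm' \<subseteq> Z Adm" and above: "\<And>\<alpha> \<alpha>'. \<alpha> \<in> Z Adm \<Longrightarrow> \<alpha> < \<alpha>' \<Longrightarrow> \<alpha>' \<in> Z Adm'"
    using le up by (auto simp: Z_def)
  have bdd: "bdd_below (Z Adm')" "bdd_below (Z Adm)"
    unfolding Z_def by (auto intro: bdd_belowI[of _ 0])
  have "Inf (Z Adm) = Inf (Z Adm')"
  proof (cases "Z Adm = {}")
    case False
    then obtain \<alpha> where "\<alpha> \<in> Z Adm" by blast
    then have "\<alpha> + 1 \<in> Z Adm'" using above by simp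
    then have ne: "Z Adm' \<noteq> {}" by blast
    have "Inf (Z Adm) \<le> Inf (Z Adm')"
      by (rule cInf_superset_mono[OF ne bdd(2) sub])
    moreover have "Inf (Z Adm') \<le> Inf (Z Adm)"
    proof (rule cInf_greatest[OF False])
      fix \<alpha> assume "\<alpha> \<in> Z Adm"
      then show "Inf (Z Adm') \<le> \<alpha>"
        using above bdd(1) by (auto intro: dense_ge cInf_lower)
    qed
    ultimately show ?thesis by simp
  qed (use sub in auto)
  then show ?thesis
    by (simp add: pack_dim_def Z_def)
qed

section \<open>Replacing packings by members of a laminar family\<close>

definition laminar :: "'a set set \<Rightarrow> bool" where
  "laminar \<A> \<longleftrightarrow> (\<forall>A\<in>\<A>. \<forall>B\<in>\<A>. A \<subseteq> B \<or> B \<subseteq> A \<or> A \<inter> B = {})"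

lemma laminar_subset: "laminar \<A> \<Longrightarrow> \<B> \<subseteq> \<A> \<Longrightarrow> laminar \<B>"
  unfolding laminar_def by blast

text \<open>Group the members by the number of members containing them: two nested members
  have different counts, so each group is disjoint.\<close>
lemma sum_laminar_le:
  fixes w :: "'a set \<Rightarrow> real"
  assumes fin: "finite \<J>" and lam: "laminar \<J>"
    and depth: "\<And>J. J \<in> \<J> \<Longrightarrow> card {J' \<in> \<J>. J \<subseteq> J'} \<le> m"
    and disj: "\<And>\<G>. \<G> \<subseteq> \<J> \<Longrightarrow> disjoint \<G> \<Longrightarrow> sum w \<G> \<le> P"
  shows "sum w \<J> \<le> real m * P"
proof -
  define ht where "ht J = card {J' \<in> \<J>. J \<subseteq> J'}" for J
  have ht_strict: "ht B < ht A" if "A \<in> \<J>" "B \<in> \<J>" "A \<subset> B" for A B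
  proof -
    have "{J' \<in> \<J>. B \<subseteq> J'} \<subset> {J' \<in> \<J>. A \<subseteq> J'}"
      using that by blast
    then show ?thesis
      unfolding ht_def using fin by (intro psubset_card_mono) auto
  qed
  have level_disjoint: "disjoint {J \<in> \<J>. ht J = c}" for c
    unfolding disjoint_def
  proof (intro ballI impI)
    fix A B assume "A \<in> {J \<in> \<J>. ht J = c}" "B \<in> {J \<in> \<J>. ht J = c}" "A \<noteq> B"
    with lam ht_strict[of A B] ht_strict[of B A] show "A \<inter> B = {}"
      unfolding laminar_def by auto
  qed
  have "ht ` \<J> \<subseteq> {1..m}"
  proof
    fix c assume "c \<in> ht ` \<J>"
    then obtain J where J: "J \<in> \<J>" "c = ht J" by blast
    then have "J \<in> {J' \<in> \<J>. J \<subseteq> J'}" by blast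
    then have "0 < ht J" unfolding ht_def using fin by (auto simp: card_gt_0_iff)
    then show "c \<in> {1..m}" using J depth[OF J(1)] by (simp add: ht_def)
  qed
  then have card: "card (ht ` \<J>) \<le> m"
    using card_mono[of "{1..m}" "ht ` \<J>"] by simp
  have "0 \<le> P" using disj[of "{}"] by simp
  have "sum w \<J> = (\<Sum>c\<in>ht ` \<J>. sum w {J \<in> \<J>. ht J = c})"
    by (rule sum.image_gen[OF fin])
  also have "\<dots> \<le> (\<Sum>c\<in>ht ` \<J>. P)"
    by (intro sum_mono disj level_disjoint) auto
  also have "\<dots> \<le> real m * P"
    using card \<open>0 \<le> P\<close> by (simp add: mult_right_mono)
  finally show ?thesis .
qed

text \<open>The intervals lie in an interval of length 4h and each is longer than h/2.\<close>
lemma card_disjoint_intervals_near_point_le_7: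
  fixes \<A> :: "real set set"
  assumes fin: "finite \<A>" and open_int: "\<A> \<subseteq> open_intervals" and disj: "disjoint \<A>"
    and len: "\<And>I. I \<in> \<A> \<Longrightarrow> h/2 < ilen I \<and> ilen I \<le> h"
    and near: "\<And>I. I \<in> \<A> \<Longrightarrow> I \<inter> {x-h<..<x+h} \<noteq> {}"
    and h: "0 < h"
  shows "card \<A> \<le> 7"
proof (rule ccontr)
  assume "\<not> card \<A> \<le> 7"
  then have c8: "8 \<le> card \<A>" by simp
  have interval: "\<exists>l u. I = {l<..<u} \<and> l < u" if "I \<in> \<A>" for I
    using that open_int by (blast elim: open_intervalsE)
  have sub: "I \<subseteq> {x-2*h..x+2*h}" if I: "I \<in> \<A>" for I
  proof -
    obtain l u where lu: "I = {l<..<u}" "l < u" using interval[OF I] by blast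
    obtain y where y: "y \<in> I" "x - h < y" "y < x + h" using near[OF I] by auto
    have "u - l \<le> h" using len[OF I] lu by (simp add: ilen_greaterThanLessThan)
    then show ?thesis using y lu by auto
  qed
  have meas: "I \<in> sets lborel \<and> emeasure lborel I \<noteq> \<infinity> \<and> measure lborel I = ilen I"
    if "I \<in> \<A>" for I
    using interval[OF that] by (auto simp: ilen_greaterThanLessThan)
  have "measure lborel (\<Union>I\<in>\<A>. id I) = (\<Sum>I\<in>\<A>. measure lborel (id I))"
    by (rule measure_finite_Union) (use fin disj meas in \<open>auto simp: disjoint_family_on_def disjoint_def\<close>)
  then have total: "measure lborel (\<Union>\<A>) = (\<Sum>I\<in>\<A>. ilen I)"
    using meas by simp
  have "measure lborel (\<Union>\<A>) \<le> measure lborel {x-2*h..x+2*h}"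
    using sub meas fin by (intro measure_mono_fmeasurable) (auto intro: fmeasurable_compact)
  also have "\<dots> = 4 * h" using h by simp
  finally have "(\<Sum>I\<in>\<A>. ilen I) \<le> 4 * h" using total by simp
  moreover have "(\<Sum>I\<in>\<A>. h/2) < (\<Sum>I\<in>\<A>. ilen I)"
    using c8 fin len by (intro sum_strict_mono) auto
  moreover have "8 * (h/2) \<le> real (card \<A>) * (h/2)"
    using c8 h by (intro mult_right_mono) auto
  ultimately show False by simp
qed

text \<open>The intervals I with J \<subseteq> g I are disjoint, of length about h and meet g I, which
  contains the midpoint of J and is not longer than I.\<close>
lemma card_covering_substitutes_le_7:
  assumes F: "finite F" "F \<subseteq> open_intervals" "disjoint F"
    and len: "\<And>I. I \<in> F \<Longrightarrow> h/2 < ilen I \<and> ilen I \<le> h"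
    and g: "\<And>I. I \<in> F \<Longrightarrow> g I \<in> open_intervals \<and> g I \<inter> I \<noteq> {} \<and> ilen (g I) \<le> ilen I"
    and J: "J \<in> open_intervals"
  shows "card {I \<in> F. J \<subseteq> g I} \<le> 7"
proof (cases "F = {}")
  case False
  then have h: "0 < h" using len ilen_pos F(2) by fastforce
  obtain l u where lu: "J = {l<..<u}" "l < u" using J by (rule open_intervalsE)
  define x where "x = (l + u) / 2"
  have x: "x \<in> J" using lu by (auto simp: x_def)
  show ?thesis
  proof (rule card_disjoint_intervals_near_point_le_7[where x = x and h = h])
    show "disjoint {I \<in> F. J \<subseteq> g I}"
      using F(3) unfolding disjoint_def by blast
    fix I assume I: "I \<in> {I \<in> F. J \<subseteq> g I}"
    then have IF: "I \<in> F" by simp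
    obtain y where y: "y \<in> g I" "y \<in> I" using g[OF IF] by blast
    have "g I \<in> open_intervals" using g[OF IF] by blast
    then obtain lg ug where lug: "g I = {lg<..<ug}" "lg < ug" by (rule open_intervalsE)
    have "ug - lg \<le> h"
      using g[OF IF] len[OF IF] lug by (auto simp: ilen_greaterThanLessThan)
    moreover have "x \<in> g I" using I x by auto
    ultimately show "I \<inter> {x - h<..<x + h} \<noteq> {}" using y lug by auto
  qed (use F len h in auto)
qed simp

text \<open>Both the depth of g ` F and the multiplicity of g are at most 7.\<close>
lemma sum_laminar_substitutes_one_scale:
  fixes w :: "real set \<Rightarrow> real"
  assumes lam: "laminar \<Phi>" and \<Phi>: "\<Phi> \<subseteq> open_intervals"
    and F: "finite F" "F \<subseteq> open_intervals" "disjoint F"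
    and len: "\<And>I. I \<in> F \<Longrightarrow> h/2 < ilen I \<and> ilen I \<le> h"
    and g: "\<And>I. I \<in> F \<Longrightarrow> g I \<in> \<Phi> \<and> g I \<inter> I \<noteq> {} \<and> ilen (g I) \<le> ilen I"
    and w: "\<And>J. 0 \<le> w J"
    and P: "\<And>\<G>. \<G> \<subseteq> g ` F \<Longrightarrow> disjoint \<G> \<Longrightarrow> sum w \<G> \<le> P"
  shows "(\<Sum>I\<in>F. w (g I)) \<le> 49 * P"
proof -
  have covers: "card {I \<in> F. J \<subseteq> g I} \<le> 7" if J: "J \<in> g ` F" for J
    using card_covering_substitutes_le_7[OF F len] g \<Phi> J by blast
  have "(\<Sum>J\<in>g ` F. w J) \<le> real 7 * P"
  proof (rule sum_laminar_le)
    show "laminar (g ` F)" using laminar_subset[OF lam] g by blast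
    fix J assume J: "J \<in> g ` F"
    have "card {J' \<in> g ` F. J \<subseteq> J'} \<le> card (g ` {I \<in> F. J \<subseteq> g I})"
      using F(1) by (intro card_mono) auto
    also have "\<dots> \<le> card {I \<in> F. J \<subseteq> g I}"
      using F(1) by (intro card_image_le) auto
    finally show "card {J' \<in> g ` F. J \<subseteq> J'} \<le> 7" using covers[OF J] by simp
  qed (use F P in auto)
  moreover have "(\<Sum>I\<in>F. w (g I)) \<le> 7 * (\<Sum>J\<in>g ` F. w J)"
  proof -
    have "(\<Sum>I\<in>F. w (g I)) = (\<Sum>J\<in>g ` F. \<Sum>I\<in>{I \<in> F. g I = J}. w (g I))"
      by (rule sum.image_gen[OF F(1)])
    also have "\<dots> = (\<Sum>J\<in>g ` F. real (card {I \<in> F. g I = J}) * w J)"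
      by (rule sum.cong) auto
    also have "\<dots> \<le> (\<Sum>J\<in>g ` F. 7 * w J)"
    proof (rule sum_mono)
      fix J assume J: "J \<in> g ` F"
      have "card {I \<in> F. g I = J} \<le> card {I \<in> F. J \<subseteq> g I}"
        using F(1) by (intro card_mono) auto
      then have "real (card {I \<in> F. g I = J}) \<le> 7" using covers[OF J] by simp
      then show "real (card {I \<in> F. g I = J}) * w J \<le> 7 * w J"
        using w by (intro mult_right_mono) auto
    qed
    finally show ?thesis by (simp add: sum_distrib_left)
  qed
  ultimately show ?thesis by simp
qed

lemma half_powr_less_1: "0 < eta \<Longrightarrow> (1/2::real) powr eta < 1"
  by (simp add: powr_divide)

lemma exists_dyadic_scale:
  fixes d :: real
  assumes "0 < d" "d \<le> 1"
  shows "\<exists>l. (1/2)^Suc l < d \<and> d \<le> (1/2)^l"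
proof -
  obtain n where n: "(1/2::real)^n < d" using real_arch_pow_inv[of d "1/2"] assms by auto
  moreover have "(1/2::real)^Suc n \<le> (1/2)^n" by (simp add: power_decreasing)
  ultimately have ex: "\<exists>l. (1/2::real)^Suc l < d" by (meson le_less_trans)
  define l where "l = (LEAST l. (1/2::real)^Suc l < d)"
  have "(1/2::real)^Suc l < d" unfolding l_def by (rule LeastI_ex[OF ex])
  moreover have "d \<le> (1/2)^l"
  proof (cases l)
    case (Suc m)
    then have "\<not> (1/2::real)^Suc m < d" unfolding l_def by (metis lessI not_less_Least)
    then show ?thesis using Suc by simp
  qed (use assms in simp)
  ultimately show ?thesis by blast
qed

lemma sum_le_geometric_by_levels:
  fixes f :: "'a \<Rightarrow> real" and lev :: "'a \<Rightarrow> nat"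
  assumes F: "finite F" and r: "0 \<le> r" "r < 1" and B: "0 \<le> B"
    and level: "\<And>l. (\<Sum>x\<in>{x \<in> F. lev x = l}. f x) \<le> r^l * B"
  shows "(\<Sum>x\<in>F. f x) \<le> B / (1 - r)"
proof -
  obtain M where M: "lev ` F \<subseteq> {..<M}"
    using finite_nat_iff_bounded finite_imageI[OF F] by blast
  have "(\<Sum>x\<in>F. f x) = (\<Sum>l\<in>lev ` F. \<Sum>x\<in>{x \<in> F. lev x = l}. f x)"
    by (rule sum.image_gen[OF F])
  also have "\<dots> \<le> (\<Sum>l\<in>lev ` F. r^l) * B"
    using level by (simp add: sum_distrib_right sum_mono)
  also have "\<dots> \<le> (\<Sum>l<M. r^l) * B"
    using M r B by (intro mult_right_mono sum_mono2) auto
  also have "\<dots> = (1 - r^M) / (1 - r) * B"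
    using r by (simp add: sum_gp_strict)
  also have "\<dots> \<le> 1 / (1 - r) * B"
    using r B by (intro mult_right_mono divide_right_mono) auto
  finally show ?thesis by simp
qed

text \<open>At dyadic scale l the factor ilen I powr eta is at most 2^(-l eta): a geometric series.\<close>
lemma sum_laminar_substitutes:
  fixes w :: "real set \<Rightarrow> real"
  assumes lam: "laminar \<Phi>" and \<Phi>: "\<Phi> \<subseteq> open_intervals"
    and F: "finite F" "F \<subseteq> open_intervals" "disjoint F" and short: "\<And>I. I \<in> F \<Longrightarrow> ilen I \<le> 1"
    and g: "\<And>I. I \<in> F \<Longrightarrow> g I \<in> \<Phi> \<and> g I \<inter> I \<noteq> {} \<and> ilen (g I) \<le> ilen I"
    and w: "\<And>J. 0 \<le> w J"
    and P: "\<And>\<G>. \<G> \<subseteq> g ` F \<Longrightarrow> disjoint \<G> \<Longrightarrow> sum w \<G> \<le> P"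
    and eta: "0 < eta"
  shows "(\<Sum>I\<in>F. w (g I) * ilen I powr eta) \<le> 49 / (1 - (1/2) powr eta) * P"
proof -
  define r where "r = (1/2::real) powr eta"
  have r: "0 < r" "r < 1"
    using half_powr_less_1[OF eta] by (auto simp: r_def)
  have "0 \<le> P" using P[of "{}"] by simp
  have "\<forall>I\<in>F. \<exists>l. (1/2::real)^Suc l < ilen I \<and> ilen I \<le> (1/2)^l"
    using exists_dyadic_scale ilen_pos F(2) short by (meson subsetD)
  then obtain lev where lev: "\<And>I. I \<in> F \<Longrightarrow> (1/2::real)^Suc (lev I) < ilen I \<and> ilen I \<le> (1/2)^lev I"
    by (metis bchoice)
  have scale: "(\<Sum>I\<in>{I \<in> F. lev I = l}. w (g I) * ilen I powr eta) \<le> r^l * (49 * P)" for l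
  proof -
    let ?F = "{I \<in> F. lev I = l}"
    have F_l: "finite ?F" "?F \<subseteq> open_intervals" "disjoint ?F"
      using F unfolding disjoint_def by auto
    have len_l: "(1/2)^l / 2 < ilen I \<and> ilen I \<le> (1/2)^l" if "I \<in> ?F" for I
      using lev[of I] that by simp
    have factor: "ilen I powr eta \<le> r^l" if "I \<in> ?F" for I
    proof -
      have "ilen I powr eta \<le> ((1/2)^l) powr eta"
        using len_l[OF that] eta by (intro powr_mono2) auto
      also have "\<dots> = (1/2) powr (real l * eta)"
        by (simp add: powr_realpow[symmetric] powr_powr)
      also have "\<dots> = r^l"
        by (simp add: r_def powr_power)
      finally show ?thesis .
    qed
    have "(\<Sum>I\<in>?F. w (g I) * ilen I powr eta) \<le> (\<Sum>I\<in>?F. w (g I) * r^l)"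
      using factor w by (intro sum_mono mult_left_mono)
    also have "\<dots> = r^l * (\<Sum>I\<in>?F. w (g I))"
      by (simp add: sum_distrib_left mult.commute)
    also have "\<dots> \<le> r^l * (49 * P)"
    proof (rule mult_left_mono)
      show "(\<Sum>I\<in>?F. w (g I)) \<le> 49 * P"
      proof (rule sum_laminar_substitutes_one_scale[OF lam \<Phi> F_l len_l])
        fix \<G> assume \<G>: "\<G> \<subseteq> g ` ?F" "disjoint \<G>"
        then have "\<G> \<subseteq> g ` F" by blast
        then show "sum w \<G> \<le> P" using \<G>(2) by (rule P)
      next
        show "\<And>I. I \<in> ?F \<Longrightarrow> g I \<in> \<Phi> \<and> g I \<inter> I \<noteq> {} \<and> ilen (g I) \<le> ilen I"
          using g by simp
      qed (use w in auto)
    qed (use r in simp)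
    finally show ?thesis .
  qed
  have "(\<Sum>I\<in>F. w (g I) * ilen I powr eta) \<le> 49 * P / (1 - r)"
    using r \<open>0 \<le> P\<close> scale by (intro sum_le_geometric_by_levels[OF F(1)]) auto
  then show ?thesis by (simp add: r_def)
qed

lemma sum_packing_powr_le_laminar:
  assumes lam: "laminar \<Phi>" and \<Phi>: "\<Phi> \<subseteq> open_intervals" and eta: "0 < eta" and eps: "eps \<le> 1"
    and substitute: "\<And>I. I \<in> open_intervals \<Longrightarrow> ilen I \<le> eps \<Longrightarrow> I \<inter> T \<noteq> {} \<Longrightarrow>
        \<exists>J\<in>\<Phi>. J \<inter> T \<noteq> {} \<and> J \<inter> I \<noteq> {} \<and> ilen J \<le> ilen I \<and>
          ilen I powr a' \<le> ilen J powr a * ilen I powr eta"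
    and F: "finite F" "packing open_intervals eps T F"
    and P: "\<And>\<G>. finite \<G> \<Longrightarrow> packing \<Phi> eps T \<G> \<Longrightarrow> (\<Sum>J\<in>\<G>. ilen J powr a) \<le> P"
  shows "(\<Sum>I\<in>F. ilen I powr a') \<le> 49 / (1 - (1/2) powr eta) * P"
proof -
  have F': "F \<subseteq> open_intervals" "disjoint F" "\<And>I. I \<in> F \<Longrightarrow> ilen I \<le> eps \<and> I \<inter> T \<noteq> {}"
    using F(2) unfolding packing_def by auto
  have "\<forall>I\<in>F. \<exists>J. J \<in> \<Phi> \<and> J \<inter> T \<noteq> {} \<and> J \<inter> I \<noteq> {} \<and> ilen J \<le> ilen I \<and>
      ilen I powr a' \<le> ilen J powr a * ilen I powr eta"
    using substitute F'(1,3) by (simp add: Bex_def subset_iff)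
  then obtain g where g: "\<And>I. I \<in> F \<Longrightarrow> g I \<in> \<Phi> \<and> g I \<inter> T \<noteq> {} \<and> g I \<inter> I \<noteq> {} \<and>
      ilen (g I) \<le> ilen I \<and> ilen I powr a' \<le> ilen (g I) powr a * ilen I powr eta"
    by (auto dest!: bchoice)
  have "(\<Sum>I\<in>F. ilen I powr a') \<le> (\<Sum>I\<in>F. ilen (g I) powr a * ilen I powr eta)"
    using g by (intro sum_mono) simp
  also have "\<dots> \<le> 49 / (1 - (1/2) powr eta) * P"
  proof (rule sum_laminar_substitutes[OF lam \<Phi> F(1) F'(1,2) _ _ _ _ eta])
    fix \<G> assume \<G>: "\<G> \<subseteq> g ` F" "disjoint \<G>"
    have "finite \<G>" using \<G>(1) F(1) finite_subset by blast
    moreover have "ilen J \<le> eps \<and> J \<inter> T \<noteq> {} \<and> J \<in> \<Phi>" if J: "J \<in> \<G>" for J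
    proof -
      obtain I where "I \<in> F" "J = g I" using J \<G>(1) by blast
      then show ?thesis using g[of I] F'(3)[of I] by auto
    qed
    ultimately have "packing \<Phi> eps T \<G>"
      using \<G>(2) unfolding packing_def by (auto intro: countable_finite)
    with \<open>finite \<G>\<close> show "(\<Sum>J\<in>\<G>. ilen J powr a) \<le> P"
      by (rule P)
  next
    show "\<And>I. I \<in> F \<Longrightarrow> ilen I \<le> 1" using F'(3) eps by (meson order_trans)
    show "\<And>I. I \<in> F \<Longrightarrow> g I \<in> \<Phi> \<and> g I \<inter> I \<noteq> {} \<and> ilen (g I) \<le> ilen I"
      using g by simp
  qed simp
  finally show ?thesis .
qed

lemma pack_eps_open_intervals_le_laminar:
  assumes lam: "laminar \<Phi>" and \<Phi>: "\<Phi> \<subseteq> open_intervals" and eta: "0 < eta" and eps: "eps \<le> 1"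
    and substitute: "\<And>I. I \<in> open_intervals \<Longrightarrow> ilen I \<le> eps \<Longrightarrow> I \<inter> T \<noteq> {} \<Longrightarrow>
        \<exists>J\<in>\<Phi>. J \<inter> T \<noteq> {} \<and> J \<inter> I \<noteq> {} \<and> ilen J \<le> ilen I \<and>
          ilen I powr a' \<le> ilen J powr a * ilen I powr eta"
  shows "pack_eps open_intervals a' eps T
    \<le> ennreal (49 / (1 - (1/2) powr eta)) * pack_eps \<Phi> a eps T"
proof -
  define C where "C = 49 / (1 - (1/2::real) powr eta)"
  have C: "0 < C"
    using half_powr_less_1[OF eta] by (simp add: C_def)
  show ?thesis
  proof (cases "pack_eps \<Phi> a eps T" rule: ennreal_cases)
    case (real P)
    have "pack_eps open_intervals a' eps T \<le> ennreal (C * P)"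
    proof (rule pack_eps_le_finite_sums)
      have bound: "(\<Sum>J\<in>\<G>. ilen J powr a) \<le> P" if "finite \<G>" "packing \<Phi> eps T \<G>" for \<G>
        using sum_le_pack_eps[OF that, of a] real by (simp add: ennreal_le_iff)
      fix F assume "finite F" "packing open_intervals eps T F"
      from sum_packing_powr_le_laminar[OF lam \<Phi> eta eps substitute this bound]
      show "(\<Sum>I\<in>F. ilen I powr a') \<le> C * P"
        by (simp add: C_def)
    qed
    also have "ennreal (C * P) = ennreal C * pack_eps \<Phi> a eps T"
      using C real by (simp only: ennreal_mult less_imp_le)
    finally show ?thesis by (simp only: C_def)
  next
    case top
    then show ?thesis using C eta by (simp add: C_def ennreal_mult_top)
  qed
qed

section \<open>Cylinders\<close>

definition admissible :: "(nat \<Rightarrow> nat) \<Rightarrow> nat \<Rightarrow> (nat \<Rightarrow> nat) \<Rightarrow> bool" where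
  "admissible N n c \<longleftrightarrow> (\<forall>k\<in>{1..n}. c k < N k)"

definition cyl :: "(nat \<Rightarrow> nat \<Rightarrow> real) \<Rightarrow> nat \<Rightarrow> (nat \<Rightarrow> nat) \<Rightarrow> real set" where
  "cyl q n c = {cyl_left q n c <..< cyl_left q n c + cyl_len q n c}"

lemma admissible_mono: "admissible N m c \<Longrightarrow> n \<le> m \<Longrightarrow> admissible N n c"
  unfolding admissible_def by auto

lemma cyl_interiors_iff:
  "A \<in> cyl_interiors N q \<longleftrightarrow> (\<exists>n c. 1 \<le> n \<and> admissible N n c \<and> A = cyl q n c)"
  unfolding cyl_interiors_def cyl_def admissible_def by auto

lemma cyl_len_0 [simp]: "cyl_len q 0 c = 1"
  and cyl_left_0 [simp]: "cyl_left q 0 c = 0"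
  by (simp_all add: cyl_len_def cyl_left_def)

lemma cyl_len_Suc: "cyl_len q (Suc n) c = cyl_len q n c * q (c (Suc n)) (Suc n)"
  by (simp add: cyl_len_def prod.cl_ivl_Suc)

lemma cyl_left_Suc:
  "cyl_left q (Suc n) c = cyl_left q n c + beta q (c (Suc n)) (Suc n) * cyl_len q n c"
  by (simp add: cyl_left_def cyl_len_def sum.cl_ivl_Suc atLeastLessThanSuc_atLeastAtMost)

lemma beta_Suc: "beta q (Suc i) k = beta q i k + q i k"
  by (simp add: beta_def)

context
  fixes n :: nat and c d :: "nat \<Rightarrow> nat"
  assumes agree: "\<And>k. k \<in> {1..n} \<Longrightarrow> c k = d k"
begin

lemma cyl_left_cong: "cyl_left q n c = cyl_left q n d"
  unfolding cyl_left_def using agree by (intro sum.cong refl arg_cong2[where f = "(*)"] prod.cong) auto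

lemma cyl_len_cong: "cyl_len q n c = cyl_len q n d"
  unfolding cyl_len_def using agree by (intro prod.cong) auto

lemma cyl_cong: "cyl q n c = cyl q n d"
  unfolding cyl_def by (simp add: cyl_left_cong cyl_len_cong)

end

locale Q_expansion =
  fixes N :: "nat \<Rightarrow> nat" and q :: "nat \<Rightarrow> nat \<Rightarrow> real"
  assumes Qexp: "Qexp N q"
begin

lemma N_ge_2: "1 \<le> k \<Longrightarrow> 2 \<le> N k"
  and q_pos: "1 \<le> k \<Longrightarrow> i < N k \<Longrightarrow> 0 < q i k"
  and sum_q: "1 \<le> k \<Longrightarrow> (\<Sum>i<N k. q i k) = 1"
  using Qexp by (simp_all add: Qexp_def)

lemma q_less_1:
  assumes "1 \<le> k" "i < N k"
  shows "q i k < 1"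
proof -
  define j where "j = (if i = 0 then 1 else 0 :: nat)"
  have j: "j < N k" "j \<noteq> i"
    using N_ge_2[OF assms(1)] by (auto simp: j_def)
  have "(\<Sum>l\<in>{i, j}. q l k) \<le> (\<Sum>l<N k. q l k)"
    using assms j q_pos by (intro sum_mono2) (auto intro: less_imp_le)
  then show ?thesis
    using sum_q[OF assms(1)] q_pos[OF assms(1) j(1)] j(2) by simp
qed

lemma beta_mono:
  assumes "1 \<le> k" "i \<le> j" "j \<le> N k"
  shows "beta q i k \<le> beta q j k"
proof -
  have "0 \<le> q l k" if "l < j" for l
    using q_pos[OF assms(1)] that assms(3) by (simp add: less_imp_le)
  then show ?thesis
    unfolding beta_def using assms(2) by (intro sum_mono2) auto
qed

lemma beta_nonneg: "1 \<le> k \<Longrightarrow> i \<le> N k \<Longrightarrow> 0 \<le> beta q i k"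
  using beta_mono[of k 0 i] by (simp add: beta_def)

lemma beta_N: "1 \<le> k \<Longrightarrow> beta q (N k) k = 1"
  using sum_q by (simp add: beta_def)

lemma cyl_len_pos: "admissible N n c \<Longrightarrow> 0 < cyl_len q n c"
  unfolding cyl_len_def admissible_def by (rule prod_pos) (auto intro: q_pos)

lemma ilen_cyl: "admissible N n c \<Longrightarrow> ilen (cyl q n c) = cyl_len q n c"
  unfolding cyl_def using cyl_len_pos by (simp add: ilen_def)

lemma cyl_interiors_subset_open_intervals: "cyl_interiors N q \<subseteq> open_intervals"
  unfolding open_intervals_def using cyl_len_pos by (force simp: cyl_interiors_iff cyl_def)

lemma cyl_len_antimono:
  assumes "n \<le> m" "admissible N m c"
  shows "cyl_len q m c \<le> cyl_len q n c"
  using assms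
proof (induction m rule: dec_induct)
  case (step m)
  then have adm: "admissible N m c" and d: "c (Suc m) < N (Suc m)"
    using admissible_mono by (auto simp: admissible_def)
  have "cyl_len q (Suc m) c \<le> cyl_len q m c"
    using cyl_len_pos[OF adm] q_less_1[of "Suc m"] d
    by (simp add: cyl_len_Suc mult_le_cancel_left1 less_imp_le)
  also have "\<dots> \<le> cyl_len q n c"
    using step adm by blast
  finally show ?case .
qed simp

lemma cyl_Suc_subset:
  assumes "admissible N (Suc n) c"
  shows "cyl q (Suc n) c \<subseteq> cyl q n c"
proof -
  have v: "admissible N n c" and d: "c (Suc n) < N (Suc n)"
    using assms admissible_mono by (auto simp: admissible_def)
  have L: "0 < cyl_len q n c" using cyl_len_pos[OF v] .
  have "beta q (c (Suc n)) (Suc n) + q (c (Suc n)) (Suc n) \<le> 1"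
    using beta_mono[of "Suc n" "Suc (c (Suc n))" "N (Suc n)"] beta_N d by (simp add: beta_Suc)
  then have "(beta q (c (Suc n)) (Suc n) + q (c (Suc n)) (Suc n)) * cyl_len q n c \<le> cyl_len q n c"
    using L by (simp add: mult_le_cancel_right1)
  then have "cyl_left q (Suc n) c + cyl_len q (Suc n) c \<le> cyl_left q n c + cyl_len q n c"
    by (simp add: cyl_left_Suc cyl_len_Suc algebra_simps)
  moreover have "cyl_left q n c \<le> cyl_left q (Suc n) c"
    using beta_nonneg[of "Suc n"] d L by (simp add: cyl_left_Suc)
  ultimately show ?thesis
    unfolding cyl_def by auto
qed

lemma cyl_antimono: "n \<le> m \<Longrightarrow> admissible N m c \<Longrightarrow> cyl q m c \<subseteq> cyl q n c"
proof (induction m rule: dec_induct)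
  case (step m)
  then show ?case
    using cyl_Suc_subset[of m c] admissible_mono[of N "Suc m" c m] by force
qed simp

lemma cyl_siblings_disjoint:
  assumes "admissible N (Suc n) c" "admissible N (Suc n) d"
    and "\<And>k. k \<in> {1..n} \<Longrightarrow> c k = d k" and "c (Suc n) < d (Suc n)"
  shows "cyl q (Suc n) c \<inter> cyl q (Suc n) d = {}"
proof -
  have L: "0 < cyl_len q n c"
    using cyl_len_pos assms(1) admissible_mono by (metis le_SucI order_refl)
  have same: "cyl_left q n c = cyl_left q n d" "cyl_len q n c = cyl_len q n d"
    using cyl_left_cong cyl_len_cong assms(3) by blast+
  have "beta q (c (Suc n)) (Suc n) + q (c (Suc n)) (Suc n) \<le> beta q (d (Suc n)) (Suc n)"
    using beta_mono[of "Suc n" "Suc (c (Suc n))" "d (Suc n)"] assms(2,4)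
    by (simp add: beta_Suc admissible_def less_imp_le)
  then have "(beta q (c (Suc n)) (Suc n) + q (c (Suc n)) (Suc n)) * cyl_len q n c
      \<le> beta q (d (Suc n)) (Suc n) * cyl_len q n c"
    using L by (intro mult_right_mono) auto
  then have "cyl_left q (Suc n) c + cyl_len q (Suc n) c \<le> cyl_left q (Suc n) d"
    using same by (simp add: cyl_left_Suc cyl_len_Suc algebra_simps)
  then show ?thesis unfolding cyl_def by auto
qed

lemma cyl_nested_or_disjoint:
  assumes "n \<le> m" "admissible N n c" "admissible N m d"
  shows "cyl q m d \<subseteq> cyl q n c \<or> cyl q n c \<inter> cyl q m d = {}"
proof (cases "\<forall>k\<in>{1..n}. c k = d k")
  case True
  then show ?thesis using cyl_cong[of n c d q] cyl_antimono[OF assms(1,3)] by auto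
next
  case False
  define p where "p = (LEAST k. k \<in> {1..n} \<and> c k \<noteq> d k)"
  have "\<exists>k. k \<in> {1..n} \<and> c k \<noteq> d k" using False by blast
  then have "p \<in> {1..n} \<and> c p \<noteq> d p"
    unfolding p_def by (rule LeastI_ex)
  then have p: "p \<in> {1..n}" "c p \<noteq> d p" by auto
  obtain p' where p': "p = Suc p'" using p(1) by (cases p) auto
  have agree: "c k = d k" if "k \<in> {1..p'}" for k
    using that not_less_Least[of k "\<lambda>k. k \<in> {1..n} \<and> c k \<noteq> d k"] p(1) p'
    by (auto simp: p_def)
  have vc: "admissible N p c" and vd: "admissible N p d"
    using assms p(1) admissible_mono by auto
  have "cyl q p c \<inter> cyl q p d = {}"
  proof (cases "c p < d p")
    case True then show ?thesis using cyl_siblings_disjoint[of p' c d] vc vd agree p' by auto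
  next
    case False
    then have "d p < c p" using p(2) by simp
    then show ?thesis using cyl_siblings_disjoint[of p' d c] vc vd agree p' by auto
  qed
  moreover have "cyl q n c \<subseteq> cyl q p c" "cyl q m d \<subseteq> cyl q p d"
    using cyl_antimono p(1) assms by auto
  ultimately show ?thesis by blast
qed

lemma laminar_cyl_interiors: "laminar (cyl_interiors N q)"
  unfolding laminar_def
proof (intro ballI)
  fix A B assume "A \<in> cyl_interiors N q" "B \<in> cyl_interiors N q"
  then obtain n c m d where A: "admissible N n c" "A = cyl q n c" and B: "admissible N m d" "B = cyl q m d"
    unfolding cyl_interiors_iff by blast
  show "A \<subseteq> B \<or> B \<subseteq> A \<or> A \<inter> B = {}"
  proof (cases "n \<le> m")
    case True
    then show ?thesis using cyl_nested_or_disjoint[OF True A(1) B(1)] A B by blast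
  next
    case False
    then show ?thesis using cyl_nested_or_disjoint[of m n d c] A B by auto
  qed
qed

lemma cyl_len_tendsto_0:
  assumes "\<forall>k\<ge>1. i k < N k"
  shows "(\<lambda>n. cyl_len q n i) \<longlonglongrightarrow> 0"
proof (rule tendsto_sandwich[of "\<lambda>_. 0" _ _ "\<lambda>n. \<Prod>k\<in>{1..n}. Max ((\<lambda>j. q j k) ` {..<N k})"])
  have adm: "admissible N n i" for n
    using assms by (simp add: admissible_def)
  show "\<forall>\<^sub>F n in sequentially. 0 \<le> cyl_len q n i"
    using cyl_len_pos[OF adm] by (simp add: order.strict_implies_order)
  have "0 \<le> q (i k) k \<and> q (i k) k \<le> Max ((\<lambda>j. q j k) ` {..<N k})" if "k \<in> {1..n}" for k n
  proof -
    have "i k < N k" "0 < q (i k) k" using assms that q_pos by auto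
    then show ?thesis by (simp add: Max_ge)
  qed
  then have "cyl_len q n i \<le> (\<Prod>k\<in>{1..n}. Max ((\<lambda>j. q j k) ` {..<N k}))" for n
    unfolding cyl_len_def by (intro prod_mono)
  then show "\<forall>\<^sub>F n in sequentially. cyl_len q n i \<le> (\<Prod>k\<in>{1..n}. Max ((\<lambda>j. q j k) ` {..<N k}))"
    by simp
qed (use Qexp in \<open>auto simp: Qexp_def\<close>)

end

section \<open>Digit sequences and regular points\<close>

definition cyl_endpoints :: "(nat \<Rightarrow> nat) \<Rightarrow> (nat \<Rightarrow> nat \<Rightarrow> real) \<Rightarrow> real set" where
  "cyl_endpoints N q = {0, 1} \<union> {cyl_left q n c | n c. admissible N n c}"

lemma countable_cyl_endpoints: "countable (cyl_endpoints N q)"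
proof -
  have "{cyl_left q n c | n c. admissible N n c}
      \<subseteq> (\<Union>n. cyl_left q n ` PiE {1..n} (\<lambda>k. {..<N k}))"
  proof
    fix y assume "y \<in> {cyl_left q n c | n c. admissible N n c}"
    then obtain n c where nc: "admissible N n c" "y = cyl_left q n c" by auto
    have "restrict c {1..n} \<in> PiE {1..n} (\<lambda>k. {..<N k})"
      using nc(1) by (auto simp: admissible_def restrict_PiE_iff)
    moreover have "cyl_left q n (restrict c {1..n}) = y"
      using nc(2) by (auto intro: cyl_left_cong)
    ultimately show "y \<in> (\<Union>n. cyl_left q n ` PiE {1..n} (\<lambda>k. {..<N k}))"
      by blast
  qed
  moreover have "countable (\<Union>n. cyl_left q n ` PiE {1..n} (\<lambda>k. {..<N k}))"
    by (rule countable_UN) (auto intro!: countable_image countable_finite finite_PiE)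
  ultimately show ?thesis
    unfolding cyl_endpoints_def by (auto intro: countable_subset)
qed

text \<open>The condition on i reads cyl_len q k i \<ge> cyl_len q (k-1) i powr (1 + ep) for k \<ge> K.\<close>
definition regular_points :: "(nat \<Rightarrow> nat) \<Rightarrow> (nat \<Rightarrow> nat \<Rightarrow> real) \<Rightarrow> real \<Rightarrow> nat \<Rightarrow> real set" where
  "regular_points N q ep n = {x. \<exists>i K. (\<forall>k\<ge>1. i k < N k) \<and> (\<forall>m. x \<in> cyl q m i) \<and> 2 \<le> K \<and>
      (\<forall>k\<ge>K. cyl_len q (k-1) i powr ep \<le> q (i k) k) \<and> 1 / real (Suc n) \<le> cyl_len q (K-1) i}"

context Q_expansion
begin

text \<open>The sub-cylinders of a cylinder cut it at the points cyl_left + beta * cyl_len, which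
  are endpoints; a point that is not an endpoint lies strictly inside one of them.\<close>
lemma cyl_next_digit:
  assumes c: "admissible N n c" and x: "x \<in> cyl q n c" "x \<notin> cyl_endpoints N q"
  shows "\<exists>d < N (Suc n). x \<in> cyl q (Suc n) (c(Suc n := d))"
proof -
  define a where "a = cyl_left q n c"
  define L where "L = cyl_len q n c"
  define p where "p j = a + beta q j (Suc n) * L" for j
  have same: "cyl_left q n (c(Suc n := d)) = a" "cyl_len q n (c(Suc n := d)) = L" for d
    unfolding a_def L_def by (auto intro: cyl_left_cong cyl_len_cong)
  have left: "cyl_left q (Suc n) (c(Suc n := d)) = p d" for d
    using same by (simp add: cyl_left_Suc p_def)
  have cyl_d: "cyl q (Suc n) (c(Suc n := d)) = {p d <..< p (Suc d)}" for d
    using same left by (simp add: cyl_def cyl_len_Suc p_def beta_Suc algebra_simps)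
  have xa: "a < x" "x < a + L" using x(1) by (auto simp: cyl_def a_def L_def)
  define S where "S = {j. j < N (Suc n) \<and> p j < x}"
  have "0 \<in> S" using N_ge_2[of "Suc n"] xa by (simp add: S_def p_def beta_def)
  then have "S \<noteq> {}" "finite S" by (auto simp: S_def)
  define d where "d = Max S"
  have d: "d < N (Suc n)" "p d < x"
    using Max_in[OF \<open>finite S\<close> \<open>S \<noteq> {}\<close>] by (auto simp: S_def d_def)
  have "x < p (Suc d)"
  proof (cases "Suc d < N (Suc n)")
    case True
    have "Suc d \<notin> S" using Max_ge[OF \<open>finite S\<close>, of "Suc d"] by (auto simp: d_def)
    then have "x \<le> p (Suc d)" using True by (auto simp: S_def)
    moreover have "admissible N (Suc n) (c(Suc n := Suc d))"
      using c True by (auto simp: admissible_def)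
    then have "p (Suc d) \<in> cyl_endpoints N q"
      unfolding cyl_endpoints_def using left[of "Suc d", symmetric] by blast
    with x(2) have "x \<noteq> p (Suc d)" by blast
    ultimately show ?thesis by simp
  next
    case False
    then have "Suc d = N (Suc n)" using d by simp
    then show ?thesis using xa beta_N[of "Suc n"] by (simp add: p_def)
  qed
  then show ?thesis using d cyl_d by auto
qed

lemma digit_sequence_exists:
  assumes x: "x \<in> {0..1}" "x \<notin> cyl_endpoints N q"
  obtains i where "\<forall>k\<ge>1. i k < N k" "\<forall>n. x \<in> cyl q n i"
proof -
  let ?P = "\<lambda>n c. admissible N n c \<and> x \<in> cyl q n c"
  have "x \<noteq> 0" "x \<noteq> 1" using x(2) by (auto simp: cyl_endpoints_def)
  then have "?P 0 (\<lambda>_. 0)" using x(1) by (auto simp: admissible_def cyl_def)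
  moreover have "\<exists>c'. ?P (Suc n) c' \<and> (\<forall>k\<le>n. c' k = c k)" if nc: "?P n c" for n c
  proof -
    obtain d where "d < N (Suc n)" "x \<in> cyl q (Suc n) (c(Suc n := d))"
      using cyl_next_digit x(2) nc by blast
    moreover have "admissible N (Suc n) (c(Suc n := d))"
      using nc \<open>d < N (Suc n)\<close> by (auto simp: admissible_def)
    ultimately show ?thesis by (intro exI[of _ "c(Suc n := d)"]) auto
  qed
  ultimately obtain cs where cs: "\<And>n. ?P n (cs n)" "\<And>n k. k \<le> n \<Longrightarrow> cs (Suc n) k = cs n k"
    using dependent_nat_choice[of ?P "\<lambda>n c c'. \<forall>k\<le>n. c' k = c k"] by metis
  have stable: "cs n k = cs k k" if "k \<le> n" for n k
    using that by (induction n rule: dec_induct) (auto simp: cs(2))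
  show ?thesis
  proof
    show "\<forall>k\<ge>1. cs k k < N k"
      using cs(1) by (auto simp: admissible_def)
    show "\<forall>n. x \<in> cyl q n (\<lambda>k. cs k k)"
      using cs(1) cyl_cong[of _ "\<lambda>k. cs k k"] stable by (metis atLeastAtMost_iff)
  qed
qed

lemma regular_points_cover:
  assumes H: "\<And>i. \<forall>k\<ge>1. i k < N k \<Longrightarrow>
           (\<lambda>k. ln (q (i k) k) / ln (\<Prod>j\<in>{1..<k}. q (i j) j)) \<longlonglongrightarrow> 0"
    and ep: "0 < ep" and x: "x \<in> {0..1}" "x \<notin> cyl_endpoints N q"
  shows "\<exists>n. x \<in> regular_points N q ep n"
proof -
  obtain i where i: "\<forall>k\<ge>1. i k < N k" "\<forall>m. x \<in> cyl q m i"
    using digit_sequence_exists[OF x] by blast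
  have adm: "admissible N m i" for m using i(1) by (simp add: admissible_def)
  obtain K0 where K0: "\<And>k. K0 \<le> k \<Longrightarrow> ln (q (i k) k) / ln (\<Prod>j\<in>{1..<k}. q (i j) j) < ep"
    using order_tendstoD(2)[OF H[OF i(1)] ep] by (auto simp: eventually_sequentially)
  define K where "K = max K0 2"
  have growth: "cyl_len q (k-1) i powr ep \<le> q (i k) k" if k: "K \<le> k" for k
  proof -
    define L where "L = cyl_len q (k-1) i"
    have "{1..<k} = {1..k-1}" using k by (auto simp: K_def)
    then have L_eq: "(\<Prod>j\<in>{1..<k}. q (i j) j) = L" by (simp add: L_def cyl_len_def)
    have "0 < L" using cyl_len_pos[OF adm] by (simp add: L_def)
    have "L \<le> cyl_len q 1 i"
      unfolding L_def using k by (intro cyl_len_antimono adm) (auto simp: K_def)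
    also have "\<dots> < 1" using q_less_1[of 1 "i 1"] i(1) by (simp add: cyl_len_def)
    finally have "ln L < 0" using \<open>0 < L\<close> by simp
    have "0 < q (i k) k" using q_pos i(1) k by (auto simp: K_def)
    have "ln (q (i k) k) / ln L < ep" using K0[of k] k L_eq by (simp add: K_def)
    then have "ep * ln L < ln (q (i k) k)"
      using \<open>ln L < 0\<close> by (simp add: neg_divide_less_eq mult.commute)
    then have "exp (ep * ln L) < q (i k) k"
      using \<open>0 < q (i k) k\<close> by (metis exp_less_cancel_iff exp_ln)
    then show ?thesis
      using \<open>0 < L\<close> by (simp add: L_def powr_def mult.commute)
  qed
  obtain n where "inverse (real (Suc n)) < cyl_len q (K-1) i"
    using reals_Archimedean cyl_len_pos[OF adm] by blast
  then have "x \<in> regular_points N q ep n"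
    unfolding regular_points_def using i growth
    by (intro CollectI exI[of _ i] exI[of _ K]) (auto simp: K_def inverse_eq_divide)
  then show ?thesis by blast
qed

text \<open>Take the first cylinder along the digit sequence of x of length at most d; its
  parent is longer than d.\<close>
lemma regular_point_cyl_of_scale:
  assumes x: "x \<in> regular_points N q ep n" and ep: "0 \<le> ep"
    and d: "0 < d" "d < 1 / real (Suc n)"
  shows "\<exists>J \<in> cyl_interiors N q. x \<in> J \<and> ilen J \<le> d \<and> d powr (1 + ep) \<le> ilen J"
proof -
  obtain i K where i: "\<forall>k\<ge>1. i k < N k" "\<forall>m. x \<in> cyl q m i" "2 \<le> K"
    "\<forall>k\<ge>K. cyl_len q (k-1) i powr ep \<le> q (i k) k" "1 / real (Suc n) \<le> cyl_len q (K-1) i"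
    using x unfolding regular_points_def by blast
  have adm: "admissible N m i" for m using i(1) by (simp add: admissible_def)
  obtain m0 where "cyl_len q m0 i < d"
    using order_tendstoD(2)[OF cyl_len_tendsto_0[OF i(1)] d(1)] by (auto simp: eventually_sequentially)
  then have ex: "\<exists>m. cyl_len q m i \<le> d" by (blast intro: less_imp_le)
  define m where "m = (LEAST m. cyl_len q m i \<le> d)"
  have m: "cyl_len q m i \<le> d" unfolding m_def by (rule LeastI_ex[OF ex])
  have "1 / real (Suc n) \<le> 1" by simp
  then have "d < 1" using d by linarith
  have "m \<noteq> 0"
  proof
    assume "m = 0"
    then show False using m \<open>d < 1\<close> by simp
  qed
  then obtain p where p: "m = Suc p" using not0_implies_Suc by blast
  have "\<not> cyl_len q p i \<le> d"
    unfolding m_def by (rule not_less_Least) (simp add: p[unfolded m_def])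
  then have parent: "d < cyl_len q p i" by simp
  have "K \<le> m"
  proof (rule ccontr)
    assume "\<not> K \<le> m"
    then have "cyl_len q (K-1) i \<le> cyl_len q m i" by (intro cyl_len_antimono adm) simp
    then show False using m d i(5) by linarith
  qed
  have "d powr (1 + ep) \<le> cyl_len q p i powr (1 + ep)"
    using d parent ep by (intro powr_mono2) auto
  also have "\<dots> = cyl_len q p i * cyl_len q p i powr ep"
    using cyl_len_pos[OF adm, of p] by (simp add: powr_add)
  also have "\<dots> \<le> cyl_len q p i * q (i m) m"
  proof (rule mult_left_mono)
    show "cyl_len q p i powr ep \<le> q (i m) m"
      using i(4) \<open>K \<le> m\<close> unfolding p by (metis diff_Suc_1)
  qed (rule less_imp_le[OF cyl_len_pos[OF adm]])
  also have "\<dots> = cyl_len q m i" by (simp add: p cyl_len_Suc)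
  finally have "d powr (1 + ep) \<le> cyl_len q m i" .
  moreover have "cyl q m i \<in> cyl_interiors N q"
    unfolding cyl_interiors_iff by (intro exI[of _ m] exI[of _ i]) (simp add: p adm)
  ultimately show ?thesis
    using i(2) m ilen_cyl[OF adm, of m] by (intro bexI[of _ "cyl q m i"]) simp_all
qed

text \<open>I is replaced by the cylinder of scale ilen I around a point of I \<inter> T.\<close>
lemma regular_points_substitute:
  assumes T: "T \<subseteq> regular_points N q ep n" and ep: "0 \<le> ep" and a: "0 \<le> a"
    and a': "(1 + ep) * a + eta \<le> a'"
    and I: "I \<in> open_intervals" "ilen I < 1 / real (Suc n)" "I \<inter> T \<noteq> {}"
  shows "\<exists>J\<in>cyl_interiors N q. J \<inter> T \<noteq> {} \<and> J \<inter> I \<noteq> {} \<and> ilen J \<le> ilen I \<and>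
           ilen I powr a' \<le> ilen J powr a * ilen I powr eta"
proof -
  define d where "d = ilen I"
  have d: "0 < d" "d < 1 / real (Suc n)" using I ilen_pos by (auto simp: d_def)
  moreover have "1 / real (Suc n) \<le> 1" by simp
  ultimately have "d \<le> 1" by linarith
  obtain x where x: "x \<in> I" "x \<in> T" using I(3) by blast
  obtain J where J: "J \<in> cyl_interiors N q" "x \<in> J" "ilen J \<le> d" "d powr (1 + ep) \<le> ilen J"
    using regular_point_cyl_of_scale[OF _ ep d] T x(2) by blast
  have "d powr a' \<le> d powr ((1 + ep) * a + eta)"
    using d \<open>d \<le> 1\<close> a' by (intro powr_mono') auto
  also have "\<dots> = (d powr (1 + ep)) powr a * d powr eta"
    by (simp only: powr_add[of d "(1 + ep) * a" eta] powr_powr)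
  also have "\<dots> \<le> ilen J powr a * d powr eta"
    using J(4) a d by (intro mult_right_mono powr_mono2) auto
  finally show ?thesis
    using J x by (intro bexI[OF _ J(1)]) (auto simp: d_def)
qed

lemma pack_measure_open_intervals_eq_0_regular:
  assumes S: "S \<subseteq> regular_points N q ep n" and ep: "0 \<le> ep" and a: "0 \<le> a"
    and eta: "0 < eta" and a': "(1 + ep) * a + eta \<le> a'"
    and null: "pack_measure (cyl_interiors N q) a S = 0"
  shows "pack_measure open_intervals a' S = 0"
proof (rule pack_measure_eq_0_if_pack_0_le[OF _ _ null])
  show "0 < 49 / (1 - (1/2::real) powr eta)"
    using half_powr_less_1[OF eta] by simp
  fix T assume "T \<subseteq> S"
  show "pack_0 open_intervals a' T \<le> ennreal (49 / (1 - (1/2) powr eta)) * pack_0 (cyl_interiors N q) a T"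
  proof (rule pack_0_le_cmult)
    fix eps :: real assume eps: "0 < eps" "eps < 1 / real (Suc n)"
    moreover have "1 / real (Suc n) \<le> 1" by simp
    ultimately have "eps \<le> 1" by linarith
    show "pack_eps open_intervals a' eps T
        \<le> ennreal (49 / (1 - (1/2) powr eta)) * pack_eps (cyl_interiors N q) a eps T"
    proof (rule pack_eps_open_intervals_le_laminar[OF laminar_cyl_interiors
          cyl_interiors_subset_open_intervals eta \<open>eps \<le> 1\<close>])
      fix I assume I: "I \<in> open_intervals" "ilen I \<le> eps" "I \<inter> T \<noteq> {}"
      have T: "T \<subseteq> regular_points N q ep n" using \<open>T \<subseteq> S\<close> S by blast
      have "ilen I < 1 / real (Suc n)" using I(2) eps(2) by linarith
      then show "\<exists>J\<in>cyl_interiors N q. J \<inter> T \<noteq> {} \<and> J \<inter> I \<noteq> {} \<and> ilen J \<le> ilen I \<and>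
          ilen I powr a' \<le> ilen J powr a * ilen I powr eta"
        by (rule regular_points_substitute[OF T ep a a' I(1) _ I(3)])
    qed
  qed (use half_powr_less_1[OF eta] in auto)
qed

text \<open>Off the countable set of endpoints, E is a countable union of sets of regular
  points; ep and eta split the gap between the exponents.\<close>
lemma pack_measure_open_intervals_eq_0:
  assumes H: "\<And>i. \<forall>k\<ge>1. i k < N k \<Longrightarrow>
           (\<lambda>k. ln (q (i k) k) / ln (\<Prod>j\<in>{1..<k}. q (i j) j)) \<longlonglongrightarrow> 0"
    and E: "E \<subseteq> {0..1}" and \<alpha>: "0 \<le> \<alpha>" "\<alpha> < \<alpha>'"
    and null: "pack_measure (cyl_interiors N q) \<alpha> E = 0"
  shows "pack_measure open_intervals \<alpha>' E = 0"
proof -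
  define ep where "ep = (\<alpha>' - \<alpha>) / (2 * (\<alpha> + 1))"
  define eta where "eta = (\<alpha>' - \<alpha>) / 2"
  have ep: "0 < ep" and eta: "0 < eta" using \<alpha> by (auto simp: ep_def eta_def)
  have "ep * \<alpha> \<le> eta"
    using \<alpha> by (simp add: ep_def eta_def field_simps mult_left_mono)
  then have "(1 + ep) * \<alpha> + eta \<le> \<alpha> + 2 * eta"
    by (simp add: algebra_simps)
  also have "\<dots> = \<alpha>'"
    by (simp add: eta_def field_simps)
  finally have a': "(1 + ep) * \<alpha> + eta \<le> \<alpha>'" .
  have E_cover: "E \<subseteq> (E \<inter> cyl_endpoints N q) \<union> (\<Union>n. E \<inter> regular_points N q ep n)"
    using regular_points_cover[OF H ep] E by blast
  have "pack_measure open_intervals \<alpha>' (E \<inter> cyl_endpoints N q) = 0"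
    using countable_cyl_endpoints \<alpha>
    by (intro pack_measure_open_intervals_countable) (auto intro: countable_subset)
  moreover have "pack_measure open_intervals \<alpha>' (\<Union>n. E \<inter> regular_points N q ep n) = 0"
  proof (rule pack_measure_UN_eq_0)
    fix n
    have "pack_measure (cyl_interiors N q) \<alpha> (E \<inter> regular_points N q ep n)
        \<le> pack_measure (cyl_interiors N q) \<alpha> E"
      by (rule pack_measure_mono) auto
    then have "pack_measure (cyl_interiors N q) \<alpha> (E \<inter> regular_points N q ep n) = 0"
      using null by simp
    then show "pack_measure open_intervals \<alpha>' (E \<inter> regular_points N q ep n) = 0"
      using pack_measure_open_intervals_eq_0_regular ep eta \<alpha> a' by (meson Int_lower2 less_imp_le)
  qed
  ultimately show ?thesis
    using pack_measure_mono[OF order_refl E_cover, of open_intervals \<alpha>']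
    by (simp add: pack_measure_Un_eq_0)
qed

end

theorem lemma1:
  fixes N :: "nat \<Rightarrow> nat" and q :: "nat \<Rightarrow> nat \<Rightarrow> real"
  assumes "Qexp N q"
    and "\<And>i :: nat \<Rightarrow> nat. (\<forall>k\<ge>1. i k < N k) \<Longrightarrow>
           (\<lambda>k. ln (q (i k) k) / ln (\<Prod>j\<in>{1..<k}. q (i j) j)) \<longlonglongrightarrow> 0"
  shows "\<forall>E. E \<subseteq> {0..1} \<longrightarrow>
           pack_dim (cyl_interiors N q) E = pack_dim open_intervals E"
proof (intro allI impI)
  interpret Q_expansion N q by (rule Q_expansion.intro) (fact assms(1))
  fix E :: "real set" assume E: "E \<subseteq> {0..1}"
  show "pack_dim (cyl_interiors N q) E = pack_dim open_intervals E"
  proof (rule pack_dim_eqI)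
    fix \<alpha> assume "pack_measure open_intervals \<alpha> E = 0"
    then show "pack_measure (cyl_interiors N q) \<alpha> E = 0"
      using pack_measure_mono[OF cyl_interiors_subset_open_intervals order_refl, of \<alpha> E]
      by simp
  next
    fix \<alpha> \<alpha>' assume "0 \<le> \<alpha>" "\<alpha> < \<alpha>'" "pack_measure (cyl_interiors N q) \<alpha> E = 0"
    then show "pack_measure open_intervals \<alpha>' E = 0"
      using pack_measure_open_intervals_eq_0[OF assms(2) E] by blast
  qed
qed

end
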